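(* For any $\rho>0$ and $\Delta>0$, the following randomized procedure $\texttt{DPStats}_L$ satisfies $\rho$-zCDP (with respect to datasets of $n$ rows $(x_i,y_i)\in\mathbb{R}^2$, $n$ public). Input: data $(x_1,y_1),\dots,(x_n,y_n)$, an integer $n\ge2$, positive integers $r,q$ with $r<n$, and $\rho,\Delta>0$. Set $\rho'=\rho/5$ and compute, with independent Gaussian noises: $\tilde{\bar x}=\frac1n\sum_i[x_i]_{-\Delta}^{\Delta}+\mathcal{N}(0,\frac{2\Delta^2}{\rho' n^2})$; $\tilde{\bar y}=\frac1n\sum_i[y_i]_{-\Delta}^{\Delta}+\mathcal{N}(0,\frac{2\Delta^2}{\rho' n^2})$; $\widetilde{\overline{x^2}}=\frac1n\sum_i[x_i^2]_0^{\Delta^2}+\mathcal{N}(0,\frac{\Delta^4}{2\rho' n^2})$; $\widetilde{\overline{xy}}=\frac1n\sum_i[x_iy_i]_{-\Delta^2}^{\Delta^2}+\mathcal{N}(0,\frac{2\Delta^4}{\rho' n^2})$; $\widetilde{\overline{y^2}}=\frac1n\sum_i[y_i^2]_0^{\Delta^2}+\mathcal{N}(0,\frac{\Delta^4}{2\rho' n^2})$; $\tilde\beta_1=\frac{\widetilde{\overline{xy}}-\tilde{\bar x}\tilde{\bar y}}{\widetilde{\overline{x^2}}-\tilde{\bar x}^2}$, $\tilde\beta_2=\frac{\tilde{\bar y}\widetilde{\overline{x^2}}-\tilde{\bar x}\widetilde{\overline{xy}}}{\widetilde{\overline{x^2}}-\tilde{\bar x}^2}$; $\widetilde{S_0^2}=\frac{n\widetilde{\overline{y^2}}-2\tilde\beta_2n\tilde{\bar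 y}+n\tilde\beta_2^2}{n-r}$, $\widetilde{S^2}=\frac{n\widetilde{\overline{y^2}}-2\tilde\beta_2n\tilde{\bar y}-2\tilde\beta_1n\widetilde{\overline{xy}}+n\tilde\beta_2^2+2\tilde\beta_1\tilde\beta_2n\tilde{\bar x}+\tilde\beta_1^2n\widetilde{\overline{xy}}}{n-r}$. Output $(\perp,\perp)$ unless $\min\big(\widetilde{S_0^2},\,(n\widetilde{\overline{x^2}}-n\tilde{\bar x}^2)/(n-1)\big)>0$, in which case output $\tilde\theta_0=(\tilde\beta_2,\tilde{\bar x},\widetilde{\overline{x^2}},\widetilde{S_0^2},n)$ and $\tilde\theta_1=(\tilde\beta_1,\tilde{\bar x},\widetilde{\overline{x^2}},\widetilde{S^2},n)$.
   Context: $[z]_a^b$ denotes $z$ clipped to $[a,b]$. Two datasets of $n$ rows are neighboring if they differ in exactly one row. A randomized mechanism $\mathcal{M}$ satisfies $\rho$-zCDP (zero-concentrated differential privacy) if for all neighboring datasets $\mathbf{x},\mathbf{x}'$ and all $\alpha\in(1,\infty)$, $D_\alpha(\mathcal{M}(\mathbf{x})\|\mathcal{M}(\mathbf{x}'))\le\rho\alpha$, where $D_\alpha$ is the Rényi divergence of order $\alpha$. *)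

theory Defs
  imports "HOL-Probability.Probability"
begin

definition clip :: "real \<Rightarrow> real \<Rightarrow> real \<Rightarrow> real" where
  "clip a b z = max a (min b z)"

definition renyi_div :: "real \<Rightarrow> 'a measure \<Rightarrow> 'a measure \<Rightarrow> ereal" where
  "renyi_div \<alpha> P Q =
     (if absolutely_continuous Q P then
        (let I = (\<integral>\<^sup>+ x. ennreal ((enn2real (RN_deriv Q P x)) powr \<alpha>) \<partial>Q)
         in if I = \<infinity> then \<infinity> else ereal (ln (enn2real I) / (\<alpha> - 1)))
      else \<infinity>)"

text \<open>Output of DPStats_L: either bottom (None) or the pair (theta0, theta1).\<close>
type_synonym theta = "real \<times> real \<times> real \<times> real \<times> nat"
type_synonym dps_out = "(theta \<times> theta) option"

definition out_space :: "dps_out measure" where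
  "out_space = sigma UNIV {A. Some -` A \<in> sets borel}"

definition gauss :: "real \<Rightarrow> real measure" where
  "gauss v = density lborel (normal_density 0 (sqrt v))"

definition dps_post :: "nat \<Rightarrow> nat \<Rightarrow> real \<Rightarrow> real \<Rightarrow> real \<Rightarrow> real \<Rightarrow> real \<Rightarrow> dps_out" where
  "dps_post n r xb yb x2 xy y2 =
     (let b1 = (xy - xb * yb) / (x2 - xb\<^sup>2);
          b2 = (yb * x2 - xb * xy) / (x2 - xb\<^sup>2);
          S0 = (real n * y2 - 2 * b2 * real n * yb + real n * b2\<^sup>2) / (real n - real r);
          S  = (real n * y2 - 2 * b2 * real n * yb - 2 * b1 * real n * xy + real n * b2\<^sup>2
                + 2 * b1 * b2 * real n * xb + b1\<^sup>2 * real n * xy) / (real n - real r)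
      in if min S0 ((real n * x2 - real n * xb\<^sup>2) / (real n - 1)) > 0
         then Some ((b2, xb, x2, S0, n), (b1, xb, x2, S, n))
         else None)"

text \<open>The mechanism DPStats_L on a dataset of pairs (x_i, y_i), i < n = length D.
  q is an input of the procedure which is not used in the computation.\<close>
definition dpstats_L :: "nat \<Rightarrow> nat \<Rightarrow> nat \<Rightarrow> real \<Rightarrow> real \<Rightarrow> (real \<times> real) list \<Rightarrow> dps_out measure" where
  "dpstats_L n r q \<rho> \<Delta> D =
     (let \<rho>' = \<rho> / 5;
          sx  = (\<Sum>i<n. clip (-\<Delta>) \<Delta> (fst (D ! i))) / real n;
          sy  = (\<Sum>i<n. clip (-\<Delta>) \<Delta> (snd (D ! i))) / real n;
          sx2 = (\<Sum>i<n. clip 0 (\<Delta>\<^sup>2) ((fst (D ! i))\<^sup>2)) / real n;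
          sxy = (\<Sum>i<n. clip (-(\<Delta>\<^sup>2)) (\<Delta>\<^sup>2) (fst (D ! i) * snd (D ! i))) / real n;
          sy2 = (\<Sum>i<n. clip 0 (\<Delta>\<^sup>2) ((snd (D ! i))\<^sup>2)) / real n;
          noise = gauss (2 * \<Delta>\<^sup>2 / (\<rho>' * (real n)\<^sup>2)) \<Otimes>\<^sub>M
                  (gauss (2 * \<Delta>\<^sup>2 / (\<rho>' * (real n)\<^sup>2)) \<Otimes>\<^sub>M
                  (gauss (\<Delta>^4 / (2 * \<rho>' * (real n)\<^sup>2)) \<Otimes>\<^sub>M
                  (gauss (2 * \<Delta>^4 / (\<rho>' * (real n)\<^sup>2)) \<Otimes>\<^sub>M
                   gauss (\<Delta>^4 / (2 * \<rho>' * (real n)\<^sup>2)))))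
      in distr noise out_space
           (\<lambda>(z1, z2, z3, z4, z5). dps_post n r (sx + z1) (sy + z2) (sx2 + z3) (sxy + z4) (sy2 + z5)))"

definition neighbouring :: "nat \<Rightarrow> 'a list \<Rightarrow> 'a list \<Rightarrow> bool" where
  "neighbouring n D D' \<longleftrightarrow> length D = n \<and> length D' = n \<and> card {i. i < n \<and> D ! i \<noteq> D' ! i} = 1"

definition zCDP :: "nat \<Rightarrow> real \<Rightarrow> ('a list \<Rightarrow> 'b measure) \<Rightarrow> bool" where
  "zCDP n \<rho> M \<longleftrightarrow> (\<forall>D D'. neighbouring n D D' \<longrightarrow>
      (\<forall>\<alpha>>1. renyi_div \<alpha> (M D) (M D') \<le> ereal (\<rho> * \<alpha>)))"

end

theory Submission
  imports Defs
begin

text \<open>Each noisy statistic is a clipped sample mean, whose sensitivity between neighbouring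
  datasets is the width of the clipping interval divided by n, plus centred Gaussian noise whose
  variance is calibrated to that sensitivity and the budget \<open>\<rho>/5\<close>. For two Gaussians of
  common variance v and means a, b the \<open>\<alpha>\<close>-th moment of the likelihood ratio is
  \<open>exp (\<alpha> (\<alpha> - 1) (a - b)\<^sup>2 / (2 v))\<close>; these moments multiply over the five independent
  coordinates, and post-processing by \<open>dps_post\<close> cannot increase them. The last fact (the
  data processing inequality) is proved without conditional expectations, by truncating the
  density of the image measure and applying Young's inequality.\<close>

abbreviation normal_measure :: "real \<Rightarrow> real \<Rightarrow> real measure" where
  "normal_measure \<mu> v \<equiv> density lborel (normal_density \<mu> (sqrt v))"

text \<open>Here \<open>K = exp ((\<alpha> - 1) D\<^sub>\<alpha>(P\<parallel>Q))\<close>; unlike the divergence, this quantity is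
  multiplicative over product measures.\<close>
definition likelihood_ratio_moment ::
    "real \<Rightarrow> 'a measure \<Rightarrow> 'a measure \<Rightarrow> ('a \<Rightarrow> real) \<Rightarrow> ennreal \<Rightarrow> bool" where
  "likelihood_ratio_moment \<alpha> P Q g K \<longleftrightarrow>
     prob_space Q \<and> prob_space P \<and> g \<in> borel_measurable Q \<and> (\<forall>x. 0 \<le> g x) \<and>
     P = density Q (\<lambda>x. ennreal (g x)) \<and> (\<integral>\<^sup>+x. ennreal (g x powr \<alpha>) \<partial>Q) = K"

lemma likelihood_ratio_moment_pair:
  assumes "likelihood_ratio_moment \<alpha> P1 Q1 g1 K1" and "likelihood_ratio_moment \<alpha> P2 Q2 g2 K2"
  shows "likelihood_ratio_moment \<alpha> (P1 \<Otimes>\<^sub>M P2) (Q1 \<Otimes>\<^sub>M Q2) (\<lambda>(x, y). g1 x * g2 y) (K1 * K2)"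
proof -
  from assms have Q1: "prob_space Q1" and P1: "prob_space P1"
    and g1[measurable]: "g1 \<in> borel_measurable Q1" and g1_nonneg: "\<And>x. 0 \<le> g1 x"
    and P1_eq: "P1 = density Q1 (\<lambda>x. ennreal (g1 x))"
    and K1: "(\<integral>\<^sup>+x. ennreal (g1 x powr \<alpha>) \<partial>Q1) = K1"
    and Q2: "prob_space Q2" and P2: "prob_space P2"
    and g2[measurable]: "g2 \<in> borel_measurable Q2" and g2_nonneg: "\<And>x. 0 \<le> g2 x"
    and P2_eq: "P2 = density Q2 (\<lambda>x. ennreal (g2 x))"
    and K2: "(\<integral>\<^sup>+x. ennreal (g2 x powr \<alpha>) \<partial>Q2) = K2"
    by (auto simp: likelihood_ratio_moment_def)
  interpret Q2: prob_space Q2 by (rule Q2)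
  have "P1 \<Otimes>\<^sub>M P2 = density (Q1 \<Otimes>\<^sub>M Q2) (\<lambda>(x, y). ennreal (g1 x) * ennreal (g2 y))"
    unfolding P1_eq P2_eq
    by (rule pair_measure_density)
      (auto intro: Q2.sigma_finite_measure_axioms prob_space_imp_sigma_finite P2 simp flip: P2_eq)
  also have "\<dots> = density (Q1 \<Otimes>\<^sub>M Q2) (\<lambda>z. ennreal ((\<lambda>(x, y). g1 x * g2 y) z))"
    by (intro density_cong) (auto simp: ennreal_mult g1_nonneg g2_nonneg)
  finally have density: "P1 \<Otimes>\<^sub>M P2 = \<dots>" .
  have "(\<integral>\<^sup>+z. ennreal ((\<lambda>(x, y). g1 x * g2 y) z powr \<alpha>) \<partial>(Q1 \<Otimes>\<^sub>M Q2))
      = (\<integral>\<^sup>+x. \<integral>\<^sup>+y. ennreal (g1 x powr \<alpha>) * ennreal (g2 y powr \<alpha>) \<partial>Q2 \<partial>Q1)"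
    by (subst Q2.nn_integral_fst[symmetric])
      (auto intro!: nn_integral_cong simp: powr_mult g1_nonneg g2_nonneg ennreal_mult)
  also have "\<dots> = K1 * K2"
    by (simp add: nn_integral_cmult nn_integral_multc K1 K2)
  finally show ?thesis
    unfolding likelihood_ratio_moment_def
    using Q1 Q2 prob_space_pair[OF P1 P2] density g1_nonneg g2_nonneg
    by (auto intro!: prob_space_pair)
qed

text \<open>Completing the square in the exponent.\<close>
lemma normal_density_ratio_powr:
  assumes "0 < v"
  shows "normal_density s' (sqrt v) x * (normal_density s (sqrt v) x / normal_density s' (sqrt v) x) powr \<alpha>
     = exp (\<alpha> * (\<alpha> - 1) * (s - s')\<^sup>2 / (2 * v)) * normal_density (\<alpha> * s + (1 - \<alpha>) * s') (sqrt v) x"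
proof -
  define c where "c = 1 / sqrt (2 * pi * v)"
  have c: "0 < c" using assms by (simp add: c_def)
  have nd: "normal_density \<mu> (sqrt v) x = c * exp (- (x - \<mu>)\<^sup>2 / (2 * v))" for \<mu>
    using assms by (simp add: normal_density_def c_def)
  have ratio: "normal_density s (sqrt v) x / normal_density s' (sqrt v) x
       = exp (- (x - s)\<^sup>2 / (2 * v) + (x - s')\<^sup>2 / (2 * v))"
    using c by (simp add: nd exp_diff[symmetric] diff_divide_distrib)
  have exponent: "- (x - s')\<^sup>2 / (2 * v) + \<alpha> * (- (x - s)\<^sup>2 / (2 * v) + (x - s')\<^sup>2 / (2 * v))
      = \<alpha> * (\<alpha> - 1) * (s - s')\<^sup>2 / (2 * v) + - (x - (\<alpha> * s + (1 - \<alpha>) * s'))\<^sup>2 / (2 * v)"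
    using assms by (simp add: field_simps power2_eq_square)
  have powr_ratio: "(normal_density s (sqrt v) x / normal_density s' (sqrt v) x) powr \<alpha>
      = exp (\<alpha> * (- (x - s)\<^sup>2 / (2 * v) + (x - s')\<^sup>2 / (2 * v)))"
    unfolding ratio powr_def by simp
  show ?thesis
    unfolding powr_ratio unfolding nd
    by (simp only: mult.assoc exp_add[symmetric] exponent) (simp only: exp_add ac_simps)
qed

lemma likelihood_ratio_moment_normal:
  assumes "0 < v"
  shows "likelihood_ratio_moment \<alpha> (normal_measure s v) (normal_measure s' v)
           (\<lambda>x. normal_density s (sqrt v) x / normal_density s' (sqrt v) x)
           (ennreal (exp (\<alpha> * (\<alpha> - 1) * (s - s')\<^sup>2 / (2 * v))))"
proof -
  have sd: "0 < sqrt v" using assms by simp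
  have pos: "0 < normal_density \<mu> (sqrt v) x" for \<mu> x using sd by (rule normal_density_pos)
  then have nonzero: "normal_density \<mu> (sqrt v) x \<noteq> 0" for \<mu> x by (metis less_irrefl)
  have [measurable]: "normal_density \<mu> (sqrt v) \<in> borel_measurable borel" for \<mu>
    unfolding normal_density_def by measurable
  have density: "normal_measure s v = density (normal_measure s' v)
     (\<lambda>x. ennreal (normal_density s (sqrt v) x / normal_density s' (sqrt v) x))"
    by (subst density_density_eq)
      (auto intro!: density_cong simp: ennreal_mult[symmetric] less_imp_le pos nonzero)
  have "(\<integral>\<^sup>+x. ennreal ((normal_density s (sqrt v) x / normal_density s' (sqrt v) x) powr \<alpha>)
        \<partial>normal_measure s' v)
      = (\<integral>\<^sup>+x. ennreal (exp (\<alpha> * (\<alpha> - 1) * (s - s')\<^sup>2 / (2 * v)))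
                * ennreal (normal_density (\<alpha> * s + (1 - \<alpha>) * s') (sqrt v) x) \<partial>lborel)"
    by (subst nn_integral_density)
      (auto intro!: nn_integral_cong simp: normal_density_ratio_powr[OF assms]
        ennreal_mult[symmetric] less_imp_le pos)
  also have "\<dots> = ennreal (exp (\<alpha> * (\<alpha> - 1) * (s - s')\<^sup>2 / (2 * v)))"
    by (simp add: nn_integral_cmult nn_integral_eq_integral integrable_normal_density[OF sd]
        integral_normal_density[OF sd] less_imp_le pos)
  finally show ?thesis
    unfolding likelihood_ratio_moment_def
    by (intro conjI allI prob_space_normal_density sd density)
      (auto simp: less_imp_le pos)
qed

definition renyi_moment :: "real \<Rightarrow> 'a measure \<Rightarrow> 'a measure \<Rightarrow> ennreal" where
  "renyi_moment \<alpha> P Q = (\<integral>\<^sup>+x. ennreal (enn2real (RN_deriv Q P x) powr \<alpha>) \<partial>Q)"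

lemma renyi_div_le_if_renyi_moment_le:
  assumes P: "prob_space P" and Q: "prob_space Q" and sets: "sets P = sets Q"
    and ac: "absolutely_continuous Q P" and \<alpha>: "1 < \<alpha>"
    and moment: "renyi_moment \<alpha> P Q \<le> ennreal (exp t)"
  shows "renyi_div \<alpha> P Q \<le> ereal (t / (\<alpha> - 1))"
proof -
  interpret P: prob_space P by (rule P)
  interpret Q: prob_space Q by (rule Q)
  define I where "I = renyi_moment \<alpha> P Q"
  have "I \<noteq> 0"
  proof
    assume "I = 0"
    then have "AE x in Q. ennreal (enn2real (RN_deriv Q P x) powr \<alpha>) = 0"
      unfolding I_def renyi_moment_def by (subst (asm) nn_integral_0_iff_AE) auto
    moreover have "AE x in Q. RN_deriv Q P x \<noteq> \<infinity>"
      by (rule Q.RN_deriv_finite[OF P.sigma_finite_measure_axioms ac sets])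
    ultimately have "AE x in Q. RN_deriv Q P x = 0"
      by eventually_elim (auto simp: enn2real_eq_0_iff)
    then have "density Q (RN_deriv Q P) = density Q (\<lambda>_. 0)"
      by (intro density_cong) auto
    then have "P = density Q (\<lambda>_. 0)"
      using Q.density_RN_deriv[OF ac sets] by simp
    then show False
      using P.emeasure_space_1 by (simp add: emeasure_density)
  qed
  moreover have I_le: "I \<le> ennreal (exp t)" using moment by (simp add: I_def)
  moreover have "I < \<top>" using I_le ennreal_less_top by (rule order.strict_trans1)
  ultimately have "I \<noteq> \<infinity>" "0 < enn2real I" "enn2real I \<le> exp t"
    using enn2real_mono[OF I_le] by (auto simp: enn2real_positive_iff zero_less_iff_neq_zero)
  then have "ln (enn2real I) / (\<alpha> - 1) \<le> t / (\<alpha> - 1)"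
    using \<alpha> ln_le_cancel_iff[of "enn2real I" "exp t"] by (intro divide_right_mono) auto
  then show ?thesis
    using ac \<open>I \<noteq> \<infinity>\<close> by (simp add: renyi_div_def I_def renyi_moment_def)
qed

lemma absolutely_continuous_distr:
  assumes ac: "absolutely_continuous M N" and sets: "sets N = sets M"
    and F: "F \<in> measurable M M'"
  shows "absolutely_continuous (distr M M' F) (distr N M' F)"
  unfolding absolutely_continuous_def
proof
  have F_N: "F \<in> measurable N M'" using F by (subst measurable_cong_sets[OF sets refl])
  fix A assume "A \<in> null_sets (distr M M' F)"
  then have "F -` A \<inter> space M \<in> null_sets N" "A \<in> sets M'"
    using ac null_sets_distr_iff[OF F] unfolding absolutely_continuous_def by blast+
  then show "A \<in> null_sets (distr N M' F)"
    using null_sets_distr_iff[OF F_N] sets_eq_imp_space_eq[OF sets] by simp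
qed

lemma ennreal_Youngs_inequality_powr:
  fixes w b :: real
  assumes "0 \<le> w" "0 \<le> b" "1 < \<alpha>"
  shows "ennreal b * ennreal (w powr (\<alpha> - 1))
    \<le> ennreal ((\<alpha> - 1) / \<alpha>) * ennreal (w powr \<alpha>) + ennreal (1 / \<alpha>) * ennreal (b powr \<alpha>)"
proof -
  have "w powr (\<alpha> - 1) * b \<le> (w powr (\<alpha> - 1)) powr (\<alpha> / (\<alpha> - 1)) / (\<alpha> / (\<alpha> - 1)) + b powr \<alpha> / \<alpha>"
    by (rule Youngs_inequality) (use assms in \<open>auto simp: field_simps\<close>)
  also have "(w powr (\<alpha> - 1)) powr (\<alpha> / (\<alpha> - 1)) = w powr \<alpha>"
    using assms by (simp add: powr_powr)
  finally have "ennreal (b * w powr (\<alpha> - 1))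
      \<le> ennreal ((\<alpha> - 1) / \<alpha> * w powr \<alpha> + 1 / \<alpha> * b powr \<alpha>)"
    by (intro ennreal_leI) (simp add: field_simps)
  moreover have "0 \<le> (\<alpha> - 1) / \<alpha>" "0 \<le> 1 / \<alpha>" using assms by auto
  ultimately show ?thesis
    using assms by (simp only: ennreal_mult ennreal_plus mult_nonneg_nonneg powr_ge_zero)
qed

lemma ennreal_min_powr_le_mult:
  fixes h :: ennreal and c :: real
  assumes "0 \<le> c" "1 < \<alpha>"
  shows "ennreal (min (enn2real h) c powr \<alpha>) \<le> ennreal (min (enn2real h) c powr (\<alpha> - 1)) * h"
proof (cases "h = \<top>")
  case False
  define u where "u = min (enn2real h) c"
  have u: "0 \<le> u" "u \<le> enn2real h" using assms by (auto simp: u_def)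
  have "u powr \<alpha> = u powr (\<alpha> - 1) * u"
    using u assms by (cases "u = 0") (auto simp: powr_diff)
  also have "\<dots> \<le> u powr (\<alpha> - 1) * enn2real h"
    using u by (intro mult_left_mono) auto
  finally have "ennreal (u powr \<alpha>) \<le> ennreal (u powr (\<alpha> - 1)) * ennreal (enn2real h)"
    by (auto simp: ennreal_mult[symmetric] intro!: ennreal_leI)
  then show ?thesis using False by (simp add: u_def ennreal_enn2real_if)
qed (use assms in simp)

lemma SUP_ennreal_min_powr:
  assumes "0 \<le> t" "0 < \<alpha>"
  shows "(SUP k::nat. ennreal (min t (real k) powr \<alpha>)) = ennreal (t powr \<alpha>)"
proof (rule antisym)
  show "(SUP k::nat. ennreal (min t (real k) powr \<alpha>)) \<le> ennreal (t powr \<alpha>)"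
    by (intro SUP_least ennreal_leI powr_mono2) (use assms in auto)
  obtain k :: nat where "t \<le> real k" using real_arch_simple by blast
  then show "ennreal (t powr \<alpha>) \<le> (SUP k::nat. ennreal (min t (real k) powr \<alpha>))"
    by (intro SUP_upper2[of k]) auto
qed

lemma ennreal_le_if_le_convex_combination:
  assumes le: "x \<le> ennreal c * x + ennreal (1 - c) * K" and fin: "x \<noteq> \<top>" and c: "0 \<le> c" "c < 1"
  shows "x \<le> K"
proof (cases "K = \<top>")
  case False
  obtain x' k where x': "x = ennreal x'" "0 \<le> x'" and k: "K = ennreal k" "0 \<le> k"
    using fin False by (cases x; cases K) auto
  have "ennreal c * x + ennreal (1 - c) * K = ennreal (c * x' + (1 - c) * k)"
    using c x' k by (simp add: ennreal_mult ennreal_plus)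
  with le have "ennreal x' \<le> ennreal (c * x' + (1 - c) * k)"
    by (simp only: x'(1))
  then have "x' \<le> c * x' + (1 - c) * k"
    by (subst (asm) ennreal_le_iff) (use c x' k in auto)
  then have "(1 - c) * x' \<le> (1 - c) * k" by (simp add: algebra_simps)
  then show ?thesis using c x' k by (simp add: ennreal_leI)
qed simp

context
  fixes \<alpha> :: real and P0 Q0 :: "'a measure" and g :: "'a \<Rightarrow> real" and K :: ennreal
    and N :: "'b measure" and F :: "'a \<Rightarrow> 'b"
  assumes ratio: "likelihood_ratio_moment \<alpha> P0 Q0 g K" and \<alpha>: "1 < \<alpha>"
    and F: "F \<in> measurable Q0 N"
begin

lemma prob_space_distr_ratio: "prob_space (distr P0 N F)" "prob_space (distr Q0 N F)"
  using ratio F by (auto simp: likelihood_ratio_moment_def intro!: prob_space.prob_space_distr)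

lemma absolutely_continuous_distr_ratio:
  "absolutely_continuous (distr Q0 N F) (distr P0 N F)"
  using ratio F
  by (auto simp: likelihood_ratio_moment_def intro!: absolutely_continuous_distr
      absolutely_continuousI_density)

text \<open>For the truncation \<open>u = min h k\<close> of the density \<open>h\<close> of the image measure, Young's
  inequality gives \<open>\<integral>u\<^sup>\<alpha> \<le> \<integral>u\<^sup>\<alpha>\<^sup>-\<^sup>1 dP = \<integral>g (u \<circ> F)\<^sup>\<alpha>\<^sup>-\<^sup>1 dQ\<^sub>0 \<le>
  (1 - 1/\<alpha>) \<integral>u\<^sup>\<alpha> + K/\<alpha>\<close>; truncation makes \<open>\<integral>u\<^sup>\<alpha>\<close> finite, so it is at most K.\<close>
lemma truncated_renyi_moment_distr_le:
  "(\<integral>\<^sup>+y. ennreal (min (enn2real (RN_deriv (distr Q0 N F) (distr P0 N F) y)) (real k) powr \<alpha>)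
     \<partial>distr Q0 N F) \<le> K"
proof -
  from ratio have g[measurable]: "g \<in> borel_measurable Q0" and g_nonneg: "\<And>x. 0 \<le> g x"
    and P0: "P0 = density Q0 (\<lambda>x. ennreal (g x))"
    and K: "(\<integral>\<^sup>+x. ennreal (g x powr \<alpha>) \<partial>Q0) = K"
    by (auto simp: likelihood_ratio_moment_def)
  note F[measurable]
  define P where "P = distr P0 N F"
  define Q where "Q = distr Q0 N F"
  define h where "h = RN_deriv Q P"
  define u where "u x = min (enn2real (h x)) (real k)" for x
  interpret Q: prob_space Q unfolding Q_def by (rule prob_space_distr_ratio)
  have F_P0[measurable]: "F \<in> measurable P0 N" using F P0 by simp
  have sets: "sets P = sets Q" by (simp add: P_def Q_def)
  have P: "density Q h = P" unfolding h_def
    by (rule Q.density_RN_deriv[OF _ sets])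
      (use absolutely_continuous_distr_ratio in \<open>simp add: P_def Q_def\<close>)
  have [measurable]: "u \<in> borel_measurable N"
    unfolding u_def h_def Q_def by measurable
  have u_nonneg: "0 \<le> u x" for x by (simp add: u_def)
  define I where "I = (\<integral>\<^sup>+y. ennreal (u y powr \<alpha>) \<partial>Q)"
  have "I \<le> (\<integral>\<^sup>+y. ennreal (real k powr \<alpha>) \<partial>Q)"
    unfolding I_def
    by (intro nn_integral_mono ennreal_leI powr_mono2) (use \<alpha> u_nonneg in \<open>auto simp: u_def\<close>)
  then have I_finite: "I \<noteq> \<top>" by (auto simp: Q.emeasure_space_1 top_unique)
  have "I \<le> (\<integral>\<^sup>+y. ennreal (u y powr (\<alpha> - 1)) * h y \<partial>Q)"
    unfolding I_def u_def using \<alpha> by (intro nn_integral_mono ennreal_min_powr_le_mult) auto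
  also have "\<dots> = (\<integral>\<^sup>+y. ennreal (u y powr (\<alpha> - 1)) \<partial>P)"
    unfolding P[symmetric] by (subst nn_integral_density) (auto simp: Q_def h_def mult.commute)
  also have "\<dots> = (\<integral>\<^sup>+x. ennreal (g x) * ennreal (u (F x) powr (\<alpha> - 1)) \<partial>Q0)"
    unfolding P_def by (subst nn_integral_distr) (auto simp: P0 nn_integral_density)
  also have "\<dots> \<le> (\<integral>\<^sup>+x. ennreal ((\<alpha> - 1) / \<alpha>) * ennreal (u (F x) powr \<alpha>)
                          + ennreal (1 / \<alpha>) * ennreal (g x powr \<alpha>) \<partial>Q0)"
    using u_nonneg g_nonneg \<alpha> by (intro nn_integral_mono ennreal_Youngs_inequality_powr)
  also have "\<dots> = ennreal ((\<alpha> - 1) / \<alpha>) * (\<integral>\<^sup>+x. ennreal (u (F x) powr \<alpha>) \<partial>Q0)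
                   + ennreal (1 / \<alpha>) * K"
    by (subst nn_integral_add) (auto simp: nn_integral_cmult K)
  also have "(\<integral>\<^sup>+x. ennreal (u (F x) powr \<alpha>) \<partial>Q0) = I"
    unfolding I_def Q_def by (subst nn_integral_distr) auto
  also have "1 / \<alpha> = 1 - (\<alpha> - 1) / \<alpha>"
    using \<alpha> by (simp add: field_simps)
  finally have "I \<le> K"
    by (rule ennreal_le_if_le_convex_combination) (use I_finite \<alpha> in auto)
  then show ?thesis by (simp add: I_def Q_def P_def h_def u_def)
qed

lemma renyi_moment_distr_le: "renyi_moment \<alpha> (distr P0 N F) (distr Q0 N F) \<le> K"
proof -
  let ?h = "RN_deriv (distr Q0 N F) (distr P0 N F)"
  let ?u = "\<lambda>k y. ennreal (min (enn2real (?h y)) (real k) powr \<alpha>)"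
  have [measurable]: "?u k \<in> borel_measurable (distr Q0 N F)" for k by measurable
  have "renyi_moment \<alpha> (distr P0 N F) (distr Q0 N F) = (\<integral>\<^sup>+y. (SUP k. ?u k y) \<partial>distr Q0 N F)"
    unfolding renyi_moment_def using \<alpha> by (intro nn_integral_cong) (simp add: SUP_ennreal_min_powr)
  also have "\<dots> = (SUP k. \<integral>\<^sup>+y. ?u k y \<partial>distr Q0 N F)"
    using \<alpha> by (intro nn_integral_monotone_convergence_SUP)
      (auto simp: incseq_def le_fun_def intro!: ennreal_leI powr_mono2)
  also have "\<dots> \<le> K"
    by (intro SUP_least truncated_renyi_moment_distr_le)
  finally show ?thesis .
qed

end

lemma renyi_div_distr_le:
  assumes "likelihood_ratio_moment \<alpha> P0 Q0 g (ennreal (exp t))" "1 < \<alpha>"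
    and "F \<in> measurable Q0 N"
  shows "renyi_div \<alpha> (distr P0 N F) (distr Q0 N F) \<le> ereal (t / (\<alpha> - 1))"
  using assms
  by (intro renyi_div_le_if_renyi_moment_le prob_space_distr_ratio
      absolutely_continuous_distr_ratio renyi_moment_distr_le) auto

lemma prob_space_gauss: "0 < v \<Longrightarrow> prob_space (gauss v)"
  unfolding gauss_def by (rule prob_space_normal_density) simp

lemma sets_gauss [measurable_cong]: "sets (gauss v) = sets borel"
  by (simp add: gauss_def)

lemma distr_gauss_shift:
  assumes "0 < v"
  shows "distr (gauss v) lborel ((+) a) = normal_measure a v"
proof -
  interpret prob_space "gauss v" using assms by (rule prob_space_gauss)
  have "distributed (gauss v) lborel (\<lambda>x. x) (normal_density 0 (sqrt v))"
    unfolding distributed_def gauss_def by (auto simp: distr_id2)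
  from normal_density_affine[OF this, of 1 a] assms
  show ?thesis by (simp add: distributed_def)
qed

lemma distr_gauss_pair_shift:
  assumes "0 < v" and "prob_space M" and "T \<in> measurable M N"
  shows "distr (gauss v \<Otimes>\<^sub>M M) (lborel \<Otimes>\<^sub>M N) (\<lambda>(x, y). (a + x, T y))
       = normal_measure a v \<Otimes>\<^sub>M distr M N T"
  unfolding distr_gauss_shift[OF assms(1), symmetric]
  by (rule pair_measure_distr[symmetric])
    (use assms in \<open>auto intro: prob_space_imp_sigma_finite prob_space.prob_space_distr\<close>)

abbreviation gauss_noise ::
    "real \<Rightarrow> real \<Rightarrow> real \<Rightarrow> real \<Rightarrow> real \<Rightarrow> (real \<times> real \<times> real \<times> real \<times> real) measure" where
  "gauss_noise v1 v2 v3 v4 v5 \<equiv> gauss v1 \<Otimes>\<^sub>M (gauss v2 \<Otimes>\<^sub>M (gauss v3 \<Otimes>\<^sub>M (gauss v4 \<Otimes>\<^sub>M gauss v5)))"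

lemma distr_gauss_noise_shift:
  assumes v: "0 < v1" "0 < v2" "0 < v3" "0 < v4" "0 < v5"
    and G: "(\<lambda>(z1, z2, z3, z4, z5). G z1 z2 z3 z4 z5)
      \<in> measurable (borel \<Otimes>\<^sub>M (borel \<Otimes>\<^sub>M (borel \<Otimes>\<^sub>M (borel \<Otimes>\<^sub>M borel)))) M"
  shows "distr (gauss_noise v1 v2 v3 v4 v5) M
           (\<lambda>(z1, z2, z3, z4, z5). G (a1 + z1) (a2 + z2) (a3 + z3) (a4 + z4) (a5 + z5))
       = distr (normal_measure a1 v1 \<Otimes>\<^sub>M (normal_measure a2 v2 \<Otimes>\<^sub>M
           (normal_measure a3 v3 \<Otimes>\<^sub>M (normal_measure a4 v4 \<Otimes>\<^sub>M normal_measure a5 v5)))) M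
           (\<lambda>(z1, z2, z3, z4, z5). G z1 z2 z3 z4 z5)"
proof -
  note prob = prob_space_gauss[OF v(2)] prob_space_gauss[OF v(3)] prob_space_gauss[OF v(4)]
    prob_space_gauss[OF v(5)]
  have e4: "normal_measure a4 v4 \<Otimes>\<^sub>M normal_measure a5 v5
      = distr (gauss v4 \<Otimes>\<^sub>M gauss v5) (lborel \<Otimes>\<^sub>M lborel) (\<lambda>(x4, x5). (a4 + x4, a5 + x5))"
    using distr_gauss_pair_shift[OF v(4) prob(4), of "(+) a5" lborel a4]
    by (simp add: distr_gauss_shift[OF v(5)])
  have e3: "normal_measure a3 v3 \<Otimes>\<^sub>M (normal_measure a4 v4 \<Otimes>\<^sub>M normal_measure a5 v5)
      = distr (gauss v3 \<Otimes>\<^sub>M (gauss v4 \<Otimes>\<^sub>M gauss v5)) (lborel \<Otimes>\<^sub>M (lborel \<Otimes>\<^sub>M lborel))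
          (\<lambda>(x3, x4, x5). (a3 + x3, a4 + x4, a5 + x5))"
    unfolding e4
    by (subst distr_gauss_pair_shift[OF v(3) prob_space_pair[OF prob(3,4)], symmetric])
      (auto simp: case_prod_beta')
  have e2: "normal_measure a2 v2 \<Otimes>\<^sub>M (normal_measure a3 v3 \<Otimes>\<^sub>M
        (normal_measure a4 v4 \<Otimes>\<^sub>M normal_measure a5 v5))
      = distr (gauss v2 \<Otimes>\<^sub>M (gauss v3 \<Otimes>\<^sub>M (gauss v4 \<Otimes>\<^sub>M gauss v5)))
          (lborel \<Otimes>\<^sub>M (lborel \<Otimes>\<^sub>M (lborel \<Otimes>\<^sub>M lborel)))
          (\<lambda>(x2, x3, x4, x5). (a2 + x2, a3 + x3, a4 + x4, a5 + x5))"
    unfolding e3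
    by (subst distr_gauss_pair_shift[OF v(2) prob_space_pair[OF prob(2) prob_space_pair[OF prob(3,4)]],
          symmetric])
      (auto simp: case_prod_beta')
  have e1: "normal_measure a1 v1 \<Otimes>\<^sub>M (normal_measure a2 v2 \<Otimes>\<^sub>M (normal_measure a3 v3 \<Otimes>\<^sub>M
        (normal_measure a4 v4 \<Otimes>\<^sub>M normal_measure a5 v5)))
      = distr (gauss_noise v1 v2 v3 v4 v5)
          (lborel \<Otimes>\<^sub>M (lborel \<Otimes>\<^sub>M (lborel \<Otimes>\<^sub>M (lborel \<Otimes>\<^sub>M lborel))))
          (\<lambda>(x1, x2, x3, x4, x5). (a1 + x1, a2 + x2, a3 + x3, a4 + x4, a5 + x5))"
    unfolding e2
    by (subst distr_gauss_pair_shift[OF v(1) prob_space_pair[OF prob(1)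
          prob_space_pair[OF prob(2) prob_space_pair[OF prob(3,4)]]], symmetric])
      (auto simp: case_prod_beta')
  have "(\<lambda>(z1, z2, z3, z4, z5). G z1 z2 z3 z4 z5)
      \<in> measurable (lborel \<Otimes>\<^sub>M (lborel \<Otimes>\<^sub>M (lborel \<Otimes>\<^sub>M (lborel \<Otimes>\<^sub>M lborel)))) M"
    using G by (subst measurable_cong_sets[OF sets_pair_measure_cong refl]) auto
  then show ?thesis
    unfolding e1 by (subst distr_distr) (auto simp: comp_def case_prod_beta')
qed

lemma measurable_out_space_option:
  assumes [measurable]: "Measurable.pred M P" "f \<in> borel_measurable M"
  shows "(\<lambda>x. if P x then Some (f x) else None) \<in> measurable M out_space"
  unfolding out_space_def
proof (rule measurable_measure_of)
  fix A :: "dps_out set"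
  assume "A \<in> {A. Some -` A \<in> sets borel}"
  then have [measurable]: "Some -` A \<in> sets borel" by simp
  have "(\<lambda>x. if P x then Some (f x) else None) -` A \<inter> space M
      = {x \<in> space M. (P x \<and> f x \<in> Some -` A) \<or> (\<not> P x \<and> None \<in> A)}"
    by (auto split: if_splits)
  also have "\<dots> \<in> sets M" by measurable
  finally show "(\<lambda>x. if P x then Some (f x) else None) -` A \<inter> space M \<in> sets M" .
qed auto

lemma measurable_dps_post:
  "(\<lambda>(xb, yb, x2, xy, y2). dps_post n r xb yb x2 xy y2)
     \<in> measurable (borel \<Otimes>\<^sub>M (borel \<Otimes>\<^sub>M (borel \<Otimes>\<^sub>M (borel \<Otimes>\<^sub>M borel)))) out_space"
  unfolding split_beta dps_post_def Let_def
  by (rule measurable_out_space_option) (unfold borel_prod[symmetric], measurable)+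

lemma renyi_div_gauss_noise_le:
  assumes v: "0 < v1" "0 < v2" "0 < v3" "0 < v4" "0 < v5" and \<alpha>: "1 < \<alpha>"
    and G: "(\<lambda>(z1, z2, z3, z4, z5). G z1 z2 z3 z4 z5)
      \<in> measurable (borel \<Otimes>\<^sub>M (borel \<Otimes>\<^sub>M (borel \<Otimes>\<^sub>M (borel \<Otimes>\<^sub>M borel)))) M"
    and \<rho>: "(a1 - b1)\<^sup>2 / (2 * v1) \<le> \<rho>1" "(a2 - b2)\<^sup>2 / (2 * v2) \<le> \<rho>2"
      "(a3 - b3)\<^sup>2 / (2 * v3) \<le> \<rho>3" "(a4 - b4)\<^sup>2 / (2 * v4) \<le> \<rho>4" "(a5 - b5)\<^sup>2 / (2 * v5) \<le> \<rho>5"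
  shows "renyi_div \<alpha>
     (distr (gauss_noise v1 v2 v3 v4 v5) M
        (\<lambda>(z1, z2, z3, z4, z5). G (a1 + z1) (a2 + z2) (a3 + z3) (a4 + z4) (a5 + z5)))
     (distr (gauss_noise v1 v2 v3 v4 v5) M
        (\<lambda>(z1, z2, z3, z4, z5). G (b1 + z1) (b2 + z2) (b3 + z3) (b4 + z4) (b5 + z5)))
   \<le> ereal (\<alpha> * (\<rho>1 + \<rho>2 + \<rho>3 + \<rho>4 + \<rho>5))"
proof -
  define c where "c a b v = \<alpha> * (\<alpha> - 1) * (a - b)\<^sup>2 / (2 * v)" for a b v :: real
  have K: "ennreal (exp (c a1 b1 v1)) * (ennreal (exp (c a2 b2 v2)) * (ennreal (exp (c a3 b3 v3))
      * (ennreal (exp (c a4 b4 v4)) * ennreal (exp (c a5 b5 v5)))))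
    = ennreal (exp (c a1 b1 v1 + c a2 b2 v2 + c a3 b3 v3 + c a4 b4 v4 + c a5 b5 v5))"
    by (simp add: exp_add ennreal_mult mult.assoc)
  note ratio = likelihood_ratio_moment_pair[OF likelihood_ratio_moment_normal[OF v(1), of \<alpha> a1 b1]
    likelihood_ratio_moment_pair[OF likelihood_ratio_moment_normal[OF v(2), of \<alpha> a2 b2]
    likelihood_ratio_moment_pair[OF likelihood_ratio_moment_normal[OF v(3), of \<alpha> a3 b3]
    likelihood_ratio_moment_pair[OF likelihood_ratio_moment_normal[OF v(4), of \<alpha> a4 b4]
    likelihood_ratio_moment_normal[OF v(5), of \<alpha> a5 b5]]]]]
  have G_normal: "(\<lambda>(z1, z2, z3, z4, z5). G z1 z2 z3 z4 z5)
      \<in> measurable (normal_measure b1 v1 \<Otimes>\<^sub>M (normal_measure b2 v2 \<Otimes>\<^sub>M (normal_measure b3 v3 \<Otimes>\<^sub>M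
       (normal_measure b4 v4 \<Otimes>\<^sub>M normal_measure b5 v5)))) M"
    using G by (subst measurable_cong_sets[OF sets_pair_measure_cong refl]) auto
  have "renyi_div \<alpha>
     (distr (gauss_noise v1 v2 v3 v4 v5) M
        (\<lambda>(z1, z2, z3, z4, z5). G (a1 + z1) (a2 + z2) (a3 + z3) (a4 + z4) (a5 + z5)))
     (distr (gauss_noise v1 v2 v3 v4 v5) M
        (\<lambda>(z1, z2, z3, z4, z5). G (b1 + z1) (b2 + z2) (b3 + z3) (b4 + z4) (b5 + z5)))
     \<le> ereal ((c a1 b1 v1 + c a2 b2 v2 + c a3 b3 v3 + c a4 b4 v4 + c a5 b5 v5) / (\<alpha> - 1))"
    unfolding distr_gauss_noise_shift[OF v G] c_def
    by (rule renyi_div_distr_le[OF ratio[unfolded K[unfolded c_def]] \<alpha> G_normal])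
  also have "(c a1 b1 v1 + c a2 b2 v2 + c a3 b3 v3 + c a4 b4 v4 + c a5 b5 v5) / (\<alpha> - 1)
      = \<alpha> * ((a1 - b1)\<^sup>2 / (2 * v1) + (a2 - b2)\<^sup>2 / (2 * v2) + (a3 - b3)\<^sup>2 / (2 * v3)
          + (a4 - b4)\<^sup>2 / (2 * v4) + (a5 - b5)\<^sup>2 / (2 * v5))"
    using \<alpha> by (simp add: c_def field_simps)
  also have "\<dots> \<le> \<alpha> * (\<rho>1 + \<rho>2 + \<rho>3 + \<rho>4 + \<rho>5)"
    using \<alpha> \<rho> by (intro mult_left_mono add_mono) auto
  finally show ?thesis by simp
qed

definition sample_mean :: "nat \<Rightarrow> ('a \<Rightarrow> real) \<Rightarrow> 'a list \<Rightarrow> real" where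
  "sample_mean n f D = (\<Sum>i<n. f (D ! i)) / real n"

lemma neighbouring_differ_in_one_row:
  assumes "neighbouring n D D'"
  shows "\<exists>i<n. \<forall>j<n. j \<noteq> i \<longrightarrow> D ! j = D' ! j"
proof -
  from assms have "card {i. i < n \<and> D ! i \<noteq> D' ! i} = 1" by (simp add: neighbouring_def)
  then obtain i where "{i. i < n \<and> D ! i \<noteq> D' ! i} = {i}" by (rule card_1_singletonE)
  then show ?thesis by blast
qed

lemma sample_mean_neighbouring_le:
  assumes "neighbouring n D D'" and "\<And>x. lo \<le> f x" "\<And>x. f x \<le> hi"
  shows "\<bar>sample_mean n f D - sample_mean n f D'\<bar> \<le> (hi - lo) / real n"
proof -
  obtain i where i: "i < n" and same: "\<And>j. j < n \<Longrightarrow> j \<noteq> i \<Longrightarrow> D ! j = D' ! j"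
    using neighbouring_differ_in_one_row[OF assms(1)] by blast
  have "(\<Sum>j<n. f (D ! j)) - (\<Sum>j<n. f (D' ! j)) = (\<Sum>j<n. f (D ! j) - f (D' ! j))"
    by (simp add: sum_subtractf)
  also have "\<dots> = f (D ! i) - f (D' ! i)"
    using i same by (subst sum.remove[of _ i]) (auto intro!: sum.neutral)
  finally have "sample_mean n f D - sample_mean n f D' = (f (D ! i) - f (D' ! i)) / real n"
    by (simp add: sample_mean_def diff_divide_distrib[symmetric])
  moreover have "\<bar>f (D ! i) - f (D' ! i)\<bar> \<le> hi - lo"
    using assms(2,3) by (auto simp: abs_le_iff intro: diff_mono)
  ultimately show ?thesis by (simp add: divide_right_mono)
qed

lemma clip_bounds:
  assumes "a \<le> b"
  shows "a \<le> clip a b z" "clip a b z \<le> b"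
  using assms by (auto simp: clip_def)

text \<open>Hypothesis v is the zCDP calibration \<open>v = s\<^sup>2 / (2 \<rho>)\<close> of the Gaussian mechanism to the
  sensitivity \<open>s = (hi - lo) / n\<close> of the clipped mean.\<close>
lemma sample_mean_clip_gauss_le:
  assumes "neighbouring n D D'" and "lo < hi" and "0 < \<rho>"
    and v: "(hi - lo)\<^sup>2 = 2 * \<rho> * (real n)\<^sup>2 * v"
  shows "(sample_mean n (\<lambda>p. clip lo hi (h p)) D - sample_mean n (\<lambda>p. clip lo hi (h p)) D')\<^sup>2
           / (2 * v) \<le> \<rho>"
proof -
  have n: "0 < real n" using neighbouring_differ_in_one_row[OF assms(1)] by auto
  have "0 < 2 * \<rho> * (real n)\<^sup>2 * v" using assms(2) by (simp flip: v)
  moreover have "0 < 2 * \<rho> * (real n)\<^sup>2" using assms(3) n by simp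
  ultimately have v_pos: "0 < v" by (rule zero_less_mult_pos)
  have "\<bar>sample_mean n (\<lambda>p. clip lo hi (h p)) D - sample_mean n (\<lambda>p. clip lo hi (h p)) D'\<bar>
      \<le> (hi - lo) / real n"
    using assms(1,2) by (intro sample_mean_neighbouring_le clip_bounds) auto
  then have "(sample_mean n (\<lambda>p. clip lo hi (h p)) D - sample_mean n (\<lambda>p. clip lo hi (h p)) D')\<^sup>2
      \<le> ((hi - lo) / real n)\<^sup>2"
    by (metis abs_ge_zero order_trans power_mono power2_abs)
  also have "\<dots> = \<rho> * (2 * v)"
    using n by (simp add: v power_divide field_simps)
  finally show ?thesis using v_pos by (simp add: pos_divide_le_eq)
qed

lemma dpstats_L_eq:
  "dpstats_L n r q \<rho> \<Delta> D =
     distr (gauss_noise (2 * \<Delta>\<^sup>2 / (\<rho> / 5 * (real n)\<^sup>2)) (2 * \<Delta>\<^sup>2 / (\<rho> / 5 * (real n)\<^sup>2))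
         (\<Delta> ^ 4 / (2 * (\<rho> / 5) * (real n)\<^sup>2)) (2 * \<Delta> ^ 4 / (\<rho> / 5 * (real n)\<^sup>2))
         (\<Delta> ^ 4 / (2 * (\<rho> / 5) * (real n)\<^sup>2)))
       out_space
       (\<lambda>(z1, z2, z3, z4, z5). dps_post n r
          (sample_mean n (\<lambda>p. clip (- \<Delta>) \<Delta> (fst p)) D + z1)
          (sample_mean n (\<lambda>p. clip (- \<Delta>) \<Delta> (snd p)) D + z2)
          (sample_mean n (\<lambda>p. clip 0 (\<Delta>\<^sup>2) ((fst p)\<^sup>2)) D + z3)
          (sample_mean n (\<lambda>p. clip (- (\<Delta>\<^sup>2)) (\<Delta>\<^sup>2) (fst p * snd p)) D + z4)
          (sample_mean n (\<lambda>p. clip 0 (\<Delta>\<^sup>2) ((snd p)\<^sup>2)) D + z5))"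
  by (simp add: dpstats_L_def Let_def sample_mean_def)

theorem lemma4p1:
  fixes n r q :: nat and \<rho> \<Delta> :: real
  assumes "n \<ge> 2" and "0 < r" and "r < n" and "0 < q"
    and "\<rho> > 0" and "\<Delta> > 0"
  shows "zCDP n \<rho> (dpstats_L n r q \<rho> \<Delta>)"
  unfolding zCDP_def
proof (intro allI impI)
  fix D D' :: "(real \<times> real) list" and \<alpha> :: real
  assume nb: "neighbouring n D D'" and \<alpha>: "1 < \<alpha>"
  have \<rho>: "0 < \<rho> / 5" using \<open>\<rho> > 0\<close> by simp
  note gauss_le = sample_mean_clip_gauss_le[OF nb _ \<rho>]
  have "renyi_div \<alpha> (dpstats_L n r q \<rho> \<Delta> D) (dpstats_L n r q \<rho> \<Delta> D')
      \<le> ereal (\<alpha> * (\<rho> / 5 + \<rho> / 5 + \<rho> / 5 + \<rho> / 5 + \<rho> / 5))"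
    unfolding dpstats_L_eq using assms
    by (intro renyi_div_gauss_noise_le[OF _ _ _ _ _ \<alpha> measurable_dps_post] gauss_le)
      (auto simp: field_simps power2_eq_square power4_eq_xxxx)
  then show "renyi_div \<alpha> (dpstats_L n r q \<rho> \<Delta> D) (dpstats_L n r q \<rho> \<Delta> D') \<le> ereal (\<rho> * \<alpha>)"
    by (simp add: mult.commute)
qed

end
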